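(* Let $f\colon\mathbb{R}^d\to\mathbb{R}\cup\{+\infty\}$ be $\rho$-weakly convex and let $\{f_x\}_{x\in\mathbb{R}^d}$ be a two-sided model family with constant $q$. Fix $a\in(0,1)$, $\mu$ with $\mu^{-1}>\rho+q$, $\theta>q$, $x_0\in\mathbb{R}^d$, and define $$x_{k+1}=\operatorname{argmin}_{x\in\mathbb{R}^d}\Big\{f_{x_k}(x)+\frac{1+\theta\mu}{2\mu}\Big\|x-\frac{x_0+\theta\mu x_k}{1+\theta\mu}\Big\|^2\Big\},\quad k\ge0.$$ If $K\ge2\log(a^{-1})\big/\log\big(\frac{\mu^{-1}-\rho+\theta}{q+\theta}\big)$, then $\|x_K-\mathrm{prox}_{\mu f}(x_0)\|\le a\|x_0-\mathrm{prox}_{\mu f}(x_0)\|$.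
   Context: Two-sided model family: for each $x\in\mathbb{R}^d$, $f_x\colon\mathbb{R}^d\to\mathbb{R}\cup\{+\infty\}$ is closed and $\rho$-weakly convex (i.e. $f_x+\frac\rho2\|\cdot\|^2$ is convex) and satisfies $|f_x(y)-f(y)|\le\frac q2\|y-x\|^2$ for all $y\in\mathbb{R}^d$. $\mathrm{prox}_{\mu f}(x)=\operatorname{argmin}_y\{f(y)+\frac1{2\mu}\|y-x\|^2\}$. *)

theory Defs
  imports "HOL-Analysis.Analysis"
begin

text \<open>Extended-real-valued functions on a Euclidean space model
  functions into R \<union> {+\<infinity>}; the value -\<infinity> is excluded explicitly.\<close>

definition closed_fun :: "('a::euclidean_space \<Rightarrow> ereal) \<Rightarrow> bool" where
  "closed_fun g \<longleftrightarrow> closed {(y, t::real). g y \<le> ereal t}"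

definition weakly_convex :: "real \<Rightarrow> ('a::euclidean_space \<Rightarrow> ereal) \<Rightarrow> bool" where
  "weakly_convex \<rho> g \<longleftrightarrow>
     (\<forall>y. g y \<noteq> -\<infinity>) \<and>
     (\<forall>x y t. 0 \<le> t \<and> t \<le> 1 \<longrightarrow>
        g ((1 - t) *\<^sub>R x + t *\<^sub>R y) + ereal (\<rho> / 2 * (norm ((1 - t) *\<^sub>R x + t *\<^sub>R y))\<^sup>2)
        \<le> ereal (1 - t) * (g x + ereal (\<rho> / 2 * (norm x)\<^sup>2))
          + ereal t * (g y + ereal (\<rho> / 2 * (norm y)\<^sup>2)))"

definition two_sided_model :: "real \<Rightarrow> real \<Rightarrow> ('a::euclidean_space \<Rightarrow> ereal) \<Rightarrow> ('a \<Rightarrow> 'a \<Rightarrow> ereal) \<Rightarrow> bool" where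
  "two_sided_model \<rho> q f fm \<longleftrightarrow>
     (\<forall>x. closed_fun (fm x) \<and> weakly_convex \<rho> (fm x)) \<and>
     (\<forall>x y. fm x y \<le> f y + ereal (q / 2 * (norm (y - x))\<^sup>2) \<and>
            f y \<le> fm x y + ereal (q / 2 * (norm (y - x))\<^sup>2))"

definition prox :: "real \<Rightarrow> ('a::euclidean_space \<Rightarrow> ereal) \<Rightarrow> 'a \<Rightarrow> 'a" where
  "prox \<mu> g x = (SOME p. \<forall>y. g p + ereal (1 / (2 * \<mu>) * (norm (p - x))\<^sup>2)
                              \<le> g y + ereal (1 / (2 * \<mu>) * (norm (y - x))\<^sup>2))"

end

theory Submission
  imports Defs
begin

text \<open>The subproblem defining x(k+1) is the model of f at x(k) plus a quadratic with weight
  \<alpha> = (1 + \<theta>\<mu>)/(2\<mu>), hence (2\<alpha> - \<rho>)-strongly convex, and its centre is chosen so that this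
  quadratic equals 1/(2\<mu>) \<parallel>z - x(0)\<parallel>^2 + \<theta>/2 \<parallel>z - x(k)\<parallel>^2 up to a constant. Evaluate the
  quadratic growth of the subproblem at p = prox \<mu> f (x(0)), use that p minimises
  f + 1/(2\<mu>) \<parallel>z - x(0)\<parallel>^2, and that the model errs by at most q/2 \<parallel>z - x(k)\<parallel>^2 at both p
  and x(k+1): all terms but two cancel, leaving
  (1/\<mu> - \<rho> + \<theta>) \<parallel>x(k+1) - p\<parallel>^2 \<le> (q + \<theta>) \<parallel>x(k) - p\<parallel>^2.
  Iterating this contraction K times gives the claim. The point p exists because
  f + 1/(2\<mu>) \<parallel>z - x(0)\<parallel>^2 is strongly convex and f is closed, which it inherits from the model.\<close>

lemma norm_sq_convex_combination:
  fixes x y c :: "'a::real_inner"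
  shows "(norm ((1 - t) *\<^sub>R x + t *\<^sub>R y - c))\<^sup>2
       = (1 - t) * (norm (x - c))\<^sup>2 + t * (norm (y - c))\<^sup>2 - t * (1 - t) * (norm (x - y))\<^sup>2"
proof -
  have "(1 - t) *\<^sub>R x + t *\<^sub>R y - c = (1 - t) *\<^sub>R (x - c) + t *\<^sub>R (y - c)"
    and "x - y = (x - c) - (y - c)"
    by (simp_all add: algebra_simps)
  then show ?thesis
    by (simp only:) (simp add: power2_norm_eq_inner inner_simps inner_commute algebra_simps)
qed

lemma weighted_norm_sq_recenter:
  fixes z u v c :: "'a::real_inner"
  assumes "(\<beta> + \<gamma>) *\<^sub>R c = \<beta> *\<^sub>R u + \<gamma> *\<^sub>R v"
  shows "\<beta> * (norm (z - u))\<^sup>2 + \<gamma> * (norm (z - v))\<^sup>2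
       = (\<beta> + \<gamma>) * (norm (z - c))\<^sup>2 + \<beta> * (norm (u - c))\<^sup>2 + \<gamma> * (norm (v - c))\<^sup>2"
proof -
  have "z - u = (z - c) - (u - c)" and "z - v = (z - c) - (v - c)" by simp_all
  moreover have "inner (z - c) (\<beta> *\<^sub>R u + \<gamma> *\<^sub>R v - (\<beta> + \<gamma>) *\<^sub>R c) = 0"
    using assms by simp
  ultimately show ?thesis
    by (simp only:) (simp add: power2_norm_eq_inner inner_simps inner_commute algebra_simps)
qed

lemma ereal_le_realE:
  assumes "x \<le> ereal r" "x \<noteq> -\<infinity>"
  obtains s where "x = ereal s" "s \<le> r"
  using assms by (cases x) auto

definition seq_closed_epigraph :: "('a::topological_space \<Rightarrow> ereal) \<Rightarrow> bool" where
  "seq_closed_epigraph g \<longleftrightarrow>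
     (\<forall>u p c L. u \<longlonglongrightarrow> p \<longrightarrow> c \<longlonglongrightarrow> L \<longrightarrow> (\<forall>n. g (u n) \<le> ereal (c n)) \<longrightarrow> g p \<le> ereal L)"

text \<open>Only points of the effective domain are compared, so \<^const>\<open>real_of_ereal\<close> never
  meets an infinite value here.\<close>

definition strongly_convex_ereal :: "real \<Rightarrow> ('a::real_normed_vector \<Rightarrow> ereal) \<Rightarrow> bool" where
  "strongly_convex_ereal \<sigma> g \<longleftrightarrow>
     (\<forall>x y t. 0 \<le> t \<longrightarrow> t \<le> 1 \<longrightarrow> g x \<noteq> \<infinity> \<longrightarrow> g y \<noteq> \<infinity> \<longrightarrow>
        g ((1 - t) *\<^sub>R x + t *\<^sub>R y) \<le> ereal ((1 - t) * real_of_ereal (g x) + t * real_of_ereal (g y)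
          - \<sigma> / 2 * t * (1 - t) * (norm (x - y))\<^sup>2))"

lemma closed_fun_imp_seq_closed_epigraph:
  assumes "closed_fun g"
  shows "seq_closed_epigraph g"
  unfolding seq_closed_epigraph_def
proof (intro allI impI)
  fix u p and c :: "nat \<Rightarrow> real" and L
  assume u: "u \<longlonglongrightarrow> p" and c: "c \<longlonglongrightarrow> L" and le: "\<forall>n. g (u n) \<le> ereal (c n)"
  have conv: "(\<lambda>n. (u n, c n)) \<longlonglongrightarrow> (p, L)" using u c by (rule tendsto_Pair)
  have mem: "(u n, c n) \<in> {(y, t::real). g y \<le> ereal t}" for n
    using le by simp
  have "closed {(y, t::real). g y \<le> ereal t}" using assms unfolding closed_fun_def .
  from closed_sequentially[OF this mem conv] show "g p \<le> ereal L" by simp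
qed

lemma seq_closed_epigraph_add_continuous:
  assumes g: "seq_closed_epigraph g" and h: "continuous_on UNIV h" and nm: "\<And>y. g y \<noteq> -\<infinity>"
  shows "seq_closed_epigraph (\<lambda>y. g y + ereal (h y))"
  unfolding seq_closed_epigraph_def
proof (intro allI impI)
  fix u p and c :: "nat \<Rightarrow> real" and L
  assume u: "u \<longlonglongrightarrow> p" and c: "c \<longlonglongrightarrow> L" and le: "\<forall>n. g (u n) + ereal (h (u n)) \<le> ereal (c n)"
  have "(\<lambda>n. h (u n)) \<longlonglongrightarrow> h p"
    using continuous_on_tendsto_compose[OF h u] by simp
  then have "(\<lambda>n. c n - h (u n)) \<longlonglongrightarrow> L - h p" using c by (intro tendsto_intros)
  moreover have "g (u n) \<le> ereal (c n - h (u n))" for n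
    using le[rule_format, of n] nm[of "u n"] by (cases "g (u n)") auto
  ultimately have "g p \<le> ereal (L - h p)"
    using g u unfolding seq_closed_epigraph_def by blast
  then show "g p + ereal (h p) \<le> ereal L"
    using nm[of p] by (cases "g p") auto
qed

text \<open>f inherits closedness from the model fm p at the limit point p: f p \<le> fm p p, and
  fm p exceeds f by at most q/2 \<parallel>z - p\<parallel>^2, which vanishes at p.\<close>

lemma two_sided_model_seq_closed_epigraph:
  assumes model: "two_sided_model \<rho> q f fm"
  shows "seq_closed_epigraph f"
  unfolding seq_closed_epigraph_def
proof (intro allI impI)
  fix u p and c :: "nat \<Rightarrow> real" and L
  assume u: "u \<longlonglongrightarrow> p" and c: "c \<longlonglongrightarrow> L" and le: "\<forall>n. f (u n) \<le> ereal (c n)"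
  have closed_p: "seq_closed_epigraph (fm p)"
    using model unfolding two_sided_model_def by (blast intro: closed_fun_imp_seq_closed_epigraph)
  have "fm p (u n) \<le> ereal (c n + q / 2 * (norm (u n - p))\<^sup>2)" for n
  proof -
    have "fm p (u n) \<le> f (u n) + ereal (q / 2 * (norm (u n - p))\<^sup>2)"
      using model unfolding two_sided_model_def by blast
    also have "\<dots> \<le> ereal (c n) + ereal (q / 2 * (norm (u n - p))\<^sup>2)"
      using le by (intro add_right_mono) blast
    finally show ?thesis by simp
  qed
  moreover have "(\<lambda>n. c n + q / 2 * (norm (u n - p))\<^sup>2) \<longlonglongrightarrow> L + q / 2 * (norm (p - p))\<^sup>2"
    using c u by (intro tendsto_intros)
  ultimately have "fm p p \<le> ereal L"
    using closed_p u unfolding seq_closed_epigraph_def by auto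
  moreover have "f p \<le> fm p p"
    using model unfolding two_sided_model_def by (metis add.right_neutral diff_self norm_zero
        power_zero_numeral mult_zero_right zero_ereal_def)
  ultimately show "f p \<le> ereal L" by simp
qed

lemma two_sided_model_nonneg:
  fixes f :: "'a::euclidean_space \<Rightarrow> ereal"
  assumes model: "two_sided_model \<rho> q f fm" and fin: "f y \<noteq> \<infinity>"
  shows "0 \<le> q"
proof -
  obtain e :: 'a where "e \<in> Basis" using nonempty_Basis by blast
  then have dist: "norm (y - (y + e)) = 1" by simp
  have "fm (y + e) y \<noteq> -\<infinity>"
    using model unfolding two_sided_model_def weakly_convex_def by blast
  moreover have up: "fm (y + e) y \<le> f y + ereal (q / 2)" and lo: "f y \<le> fm (y + e) y + ereal (q / 2)"
    using model dist unfolding two_sided_model_def by (metis one_power2 mult_1_right)+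
  ultimately obtain s r where "fm (y + e) y = ereal s" "f y = ereal r"
    using fin by (cases "fm (y + e) y"; cases "f y") auto
  with up lo show ?thesis by simp
qed

lemma weakly_convex_add_sq_dist:
  fixes g :: "'a::euclidean_space \<Rightarrow> ereal"
  assumes wc: "weakly_convex \<rho> g"
  shows "strongly_convex_ereal (2 * \<alpha> - \<rho>) (\<lambda>z. g z + ereal (\<alpha> * (norm (z - c))\<^sup>2))"
  unfolding strongly_convex_ereal_def
proof (intro allI impI)
  fix x y :: 'a and t :: real
  assume t: "0 \<le> t" "t \<le> 1"
    and fx: "g x + ereal (\<alpha> * (norm (x - c))\<^sup>2) \<noteq> \<infinity>"
    and fy: "g y + ereal (\<alpha> * (norm (y - c))\<^sup>2) \<noteq> \<infinity>"
  have nm: "\<And>z. g z \<noteq> -\<infinity>" using wc unfolding weakly_convex_def by blast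
  obtain gx gy where gx: "g x = ereal gx" and gy: "g y = ereal gy"
    using fx fy nm[of x] nm[of y] by (cases "g x"; cases "g y") auto
  define z where "z = (1 - t) *\<^sub>R x + t *\<^sub>R y"
  have "g z + ereal (\<rho> / 2 * (norm z)\<^sup>2)
      \<le> ereal (1 - t) * (g x + ereal (\<rho> / 2 * (norm x)\<^sup>2))
        + ereal t * (g y + ereal (\<rho> / 2 * (norm y)\<^sup>2))"
    using wc t unfolding weakly_convex_def z_def by blast
  then have "g z + ereal (\<rho> / 2 * (norm z)\<^sup>2)
      \<le> ereal ((1 - t) * (gx + \<rho> / 2 * (norm x)\<^sup>2) + t * (gy + \<rho> / 2 * (norm y)\<^sup>2))"
    unfolding gx gy by simp
  then obtain gz where gz: "g z = ereal gz"
    and le: "gz + \<rho> / 2 * (norm z)\<^sup>2 \<le> (1 - t) * (gx + \<rho> / 2 * (norm x)\<^sup>2) + t * (gy + \<rho> / 2 * (norm y)\<^sup>2)"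
    using nm[of z] by (cases "g z") auto
  have nz: "(norm z)\<^sup>2 = (1 - t) * (norm x)\<^sup>2 + t * (norm y)\<^sup>2 - t * (1 - t) * (norm (x - y))\<^sup>2"
    using norm_sq_convex_combination[of t x y 0] unfolding z_def by simp
  have nzc: "(norm (z - c))\<^sup>2
      = (1 - t) * (norm (x - c))\<^sup>2 + t * (norm (y - c))\<^sup>2 - t * (1 - t) * (norm (x - y))\<^sup>2"
    using norm_sq_convex_combination[of t x y c] unfolding z_def by simp
  have "gz + \<alpha> * (norm (z - c))\<^sup>2 \<le> (1 - t) * (gx + \<alpha> * (norm (x - c))\<^sup>2)
      + t * (gy + \<alpha> * (norm (y - c))\<^sup>2) - (2 * \<alpha> - \<rho>) / 2 * t * (1 - t) * (norm (x - y))\<^sup>2"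
    using le unfolding nz nzc by (simp add: field_simps)
  then show "g z + ereal (\<alpha> * (norm (z - c))\<^sup>2)
      \<le> ereal ((1 - t) * real_of_ereal (g x + ereal (\<alpha> * (norm (x - c))\<^sup>2))
         + t * real_of_ereal (g y + ereal (\<alpha> * (norm (y - c))\<^sup>2))
         - (2 * \<alpha> - \<rho>) / 2 * t * (1 - t) * (norm (x - y))\<^sup>2)"
    unfolding gx gy gz by simp
qed

lemma strongly_convex_quadratic_growth:
  assumes sc: "strongly_convex_ereal \<sigma> g" and min: "\<And>y. g p \<le> g y"
    and gp: "g p = ereal a" and gz: "g z = ereal b"
  shows "a + \<sigma> / 2 * (norm (z - p))\<^sup>2 \<le> b"
proof -
  define B where "B = \<sigma> / 2 * (norm (z - p))\<^sup>2"
  have key: "(1 - t) * B \<le> b - a" if t: "0 < t" "t \<le> 1" for t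
  proof -
    have "ereal a \<le> g ((1 - t) *\<^sub>R p + t *\<^sub>R z)" using min gp by metis
    also have "\<dots> \<le> ereal ((1 - t) * a + t * b - \<sigma> / 2 * t * (1 - t) * (norm (p - z))\<^sup>2)"
      using sc[unfolded strongly_convex_ereal_def, rule_format, of t p z] t gp gz by simp
    finally have "t * ((1 - t) * B) \<le> t * (b - a)"
      unfolding B_def by (simp add: norm_minus_commute algebra_simps)
    then show ?thesis using t by simp
  qed
  have "B \<le> b - a"
  proof (cases "B \<le> 0")
    case True
    then show ?thesis using key[of 1] by simp
  next
    case False
    show ?thesis
    proof (rule dense_le_bounded[of 0 B])
      fix w assume "0 < w" "w < B"
      then show "w \<le> b - a" using key[of "1 - w / B"] False by simp
    qed (use False in simp)
  qed
  then show ?thesis unfolding B_def by simp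
qed

lemma seq_closed_epigraph_locally_bounded_below:
  fixes g :: "'a::real_normed_vector \<Rightarrow> ereal"
  assumes lsc: "seq_closed_epigraph g" and gp: "g p = ereal c" and "b < c"
  obtains r where "r > 0" "\<And>w. norm (w - p) < r \<Longrightarrow> ereal b < g w"
proof -
  have "\<exists>r>0. \<forall>w. norm (w - p) < r \<longrightarrow> ereal b < g w"
  proof (rule ccontr)
    assume "\<not> ?thesis"
    then have "\<exists>w. norm (w - p) < 1 / real (Suc n) \<and> g w \<le> ereal b" for n
      by (metis not_less of_nat_0_less_iff zero_less_Suc zero_less_divide_1_iff)
    then obtain w where w_near: "\<And>n. norm (w n - p) < 1 / real (Suc n)"
      and w_le: "\<And>n. g (w n) \<le> ereal b" by metis
    have "(\<lambda>n. w n - p) \<longlonglongrightarrow> 0" using w_near by (rule LIMSEQ_norm_0)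
    then have "w \<longlonglongrightarrow> p" by (rule LIM_zero_cancel)
    then have "g p \<le> ereal b"
      using lsc w_le unfolding seq_closed_epigraph_def by blast
    then show False using gp \<open>b < c\<close> by simp
  qed
  then show ?thesis using that by blast
qed

lemma strongly_convex_far_lower_bound:
  fixes g :: "'a::real_normed_vector \<Rightarrow> ereal"
  assumes sc: "strongly_convex_ereal \<sigma> g" and \<sigma>: "0 \<le> \<sigma>"
    and gp: "g p = ereal c" and gv: "g v = ereal b"
    and near: "\<And>w. norm (w - p) < r \<Longrightarrow> ereal (c - 1) < g w"
    and r: "0 < r" "r \<le> norm (v - p)"
  shows "c - 2 * norm (v - p) / r + \<sigma> / 4 * (norm (v - p))\<^sup>2 < b"
proof -
  define d where "d = norm (v - p)"
  have d: "r \<le> d" "0 < d" using r unfolding d_def by auto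
  \<comment> \<open>Compare with the point of the segment from p to v at distance r/2 from p.\<close>
  define t where "t = r / (2 * d)"
  have t: "0 < t" "t \<le> 1 / 2" using d r unfolding t_def by (auto simp: field_simps)
  have "norm ((1 - t) *\<^sub>R p + t *\<^sub>R v - p) = t * d"
    using t unfolding d_def by (simp add: algebra_simps flip: scaleR_diff_right)
  also have "\<dots> < r" using d r unfolding t_def by simp
  finally have "ereal (c - 1) < g ((1 - t) *\<^sub>R p + t *\<^sub>R v)" by (rule near)
  also have "\<dots> \<le> ereal ((1 - t) * c + t * b - \<sigma> / 2 * t * (1 - t) * d\<^sup>2)"
    using sc[unfolded strongly_convex_ereal_def, rule_format, of t p v] t gp gv
    unfolding d_def by (simp add: norm_minus_commute)
  finally have "c - 1 < (1 - t) * c + t * b - \<sigma> / 2 * t * (1 - t) * d\<^sup>2" by simp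
  moreover have "\<sigma> / 4 * t * d\<^sup>2 \<le> \<sigma> / 2 * t * (1 - t) * d\<^sup>2"
  proof -
    have "\<sigma> / 2 * t * d\<^sup>2 * (1 / 2) \<le> \<sigma> / 2 * t * d\<^sup>2 * (1 - t)"
      using t \<sigma> by (intro mult_left_mono) auto
    then show ?thesis by (simp add: ac_simps)
  qed
  ultimately have "c - 1 < (1 - t) * c + t * b - \<sigma> / 4 * t * d\<^sup>2" by linarith
  then have "t * (c - b + \<sigma> / 4 * d\<^sup>2) < 1" by (simp add: algebra_simps)
  then show ?thesis using t d r unfolding t_def d_def[symmetric] by (simp add: field_simps)
qed

lemma strongly_convex_bounded_below:
  fixes g :: "'a::real_normed_vector \<Rightarrow> ereal"
  assumes lsc: "seq_closed_epigraph g" and nm: "\<And>y. g y \<noteq> -\<infinity>" and gp: "g p = ereal c"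
    and sc: "strongly_convex_ereal \<sigma> g" and \<sigma>: "\<sigma> > 0"
  obtains B where "\<And>v. ereal B \<le> g v"
proof -
  obtain r where r: "r > 0" and near: "\<And>w. norm (w - p) < r \<Longrightarrow> ereal (c - 1) < g w"
    using seq_closed_epigraph_locally_bounded_below[OF lsc gp, of "c - 1"] by auto
  have "ereal (c - 1 - 4 / (\<sigma> * r\<^sup>2)) \<le> g v" for v
  proof (cases "g v")
    case (real b)
    define d where "d = norm (v - p)"
    have "c - 1 - 4 / (\<sigma> * r\<^sup>2) \<le> b"
    proof (cases "d < r")
      case True
      then have "c - 1 < b" using near[of v] real unfolding d_def by simp
      moreover have "0 \<le> 4 / (\<sigma> * r\<^sup>2)" using \<sigma> by simp
      ultimately show ?thesis by linarith
    next
      case False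
      then have "c - 2 * d / r + \<sigma> / 4 * d\<^sup>2 < b"
        using strongly_convex_far_lower_bound[OF sc _ gp real near r] \<sigma> unfolding d_def by simp
      moreover have "\<sigma> / 4 * d\<^sup>2 - 2 * d / r + 4 / (\<sigma> * r\<^sup>2) = \<sigma> / 4 * (d - 4 / (\<sigma> * r))\<^sup>2"
        using \<sigma> r by (simp add: field_simps power2_eq_square)
      moreover have "0 \<le> \<sigma> / 4 * (d - 4 / (\<sigma> * r))\<^sup>2" using \<sigma> by simp
      ultimately show ?thesis by linarith
    qed
    then show ?thesis unfolding real by simp
  qed (use nm in auto)
  then show ?thesis using that by blast
qed

lemma strongly_convex_near_minimal_close:
  assumes sc: "strongly_convex_ereal \<sigma> g" and lb: "\<And>y. ereal m \<le> g y"
    and u: "g u < ereal (m + \<sigma> / 8 * \<delta>\<^sup>2)" and v: "g v < ereal (m + \<sigma> / 8 * \<delta>\<^sup>2)"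
    and \<sigma>: "\<sigma> > 0" and \<delta>: "0 \<le> \<delta>"
  shows "norm (u - v) \<le> \<delta>"
proof -
  obtain a b where a: "g u = ereal a" and b: "g v = ereal b"
    using u v lb[of u] lb[of v] by (cases "g u"; cases "g v") auto
  have "ereal m \<le> g ((1 - 1 / 2) *\<^sub>R u + (1 / 2) *\<^sub>R v)" by (rule lb)
  also have "\<dots> \<le> ereal ((1 - 1 / 2) * a + 1 / 2 * b - \<sigma> / 2 * (1 / 2) * (1 - 1 / 2) * (norm (u - v))\<^sup>2)"
    using sc[unfolded strongly_convex_ereal_def, rule_format, of "1 / 2" u v] a b by simp
  finally have "\<sigma> / 8 * (norm (u - v))\<^sup>2 \<le> (a + b) / 2 - m" by (simp add: field_simps)
  moreover have "a < m + \<sigma> / 8 * \<delta>\<^sup>2" "b < m + \<sigma> / 8 * \<delta>\<^sup>2" using u v a b by simp_all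
  ultimately have "\<sigma> / 8 * (norm (u - v))\<^sup>2 \<le> \<sigma> / 8 * \<delta>\<^sup>2" by argo
  then show ?thesis using \<sigma> \<delta> by (auto intro: power2_le_imp_le)
qed

lemma strongly_convex_has_minimizer:
  fixes g :: "'a::banach \<Rightarrow> ereal"
  assumes lsc: "seq_closed_epigraph g" and nm: "\<And>y. g y \<noteq> -\<infinity>" and gp: "g p0 \<noteq> \<infinity>"
    and sc: "strongly_convex_ereal \<sigma> g" and \<sigma>: "\<sigma> > 0"
  obtains p where "\<And>y. g p \<le> g y"
proof -
  obtain c where "g p0 = ereal c" using gp nm[of p0] by (cases "g p0") auto
  then obtain B where "\<And>v. ereal B \<le> g v"
    using strongly_convex_bounded_below[OF lsc nm _ sc \<sigma>] by metis
  then have "ereal B \<le> Inf (range g)" by (auto intro: Inf_greatest)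
  moreover have "Inf (range g) \<le> g p0" by (rule Inf_lower) simp
  ultimately obtain m where m: "Inf (range g) = ereal m" using gp by (cases "Inf (range g)") auto
  have lb: "\<And>y. ereal m \<le> g y" unfolding m[symmetric] by (rule Inf_lower) simp
  define \<epsilon> where "\<epsilon> n = inverse (real (Suc n))" for n
  have "\<exists>u. g u < ereal (m + \<sigma> / 8 * (\<epsilon> n)\<^sup>2)" for n
  proof -
    have "Inf (range g) < ereal (m + \<sigma> / 8 * (\<epsilon> n)\<^sup>2)" using m \<sigma> unfolding \<epsilon>_def by simp
    then show ?thesis by (auto simp: Inf_less_iff)
  qed
  then obtain u where u: "\<And>n. g (u n) < ereal (m + \<sigma> / 8 * (\<epsilon> n)\<^sup>2)" by metis
  have "g (u n) < ereal (m + \<sigma> / 8 * (\<epsilon> N)\<^sup>2)" if "N \<le> n" for n N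
  proof -
    have "\<epsilon> n \<le> \<epsilon> N" using that unfolding \<epsilon>_def by (auto simp: field_simps)
    then have "\<sigma> / 8 * (\<epsilon> n)\<^sup>2 \<le> \<sigma> / 8 * (\<epsilon> N)\<^sup>2"
      using \<sigma> unfolding \<epsilon>_def by (auto intro!: mult_left_mono power_mono)
    then show ?thesis using u[of n] by (simp add: order_less_le_trans)
  qed
  then have close: "norm (u n - u k) \<le> \<epsilon> N" if "N \<le> n" "N \<le> k" for n k N
    using strongly_convex_near_minimal_close[OF sc lb _ _ \<sigma>] that unfolding \<epsilon>_def by simp
  have "Cauchy u"
  proof (rule CauchyI)
    fix e :: real assume "0 < e"
    then obtain N where "\<epsilon> N < e" unfolding \<epsilon>_def using reals_Archimedean by blast
    then show "\<exists>M. \<forall>m\<ge>M. \<forall>n\<ge>M. norm (u m - u n) < e"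
      using close by (meson le_less_trans)
  qed
  then obtain p where "u \<longlonglongrightarrow> p" unfolding Cauchy_convergent_iff convergent_def by blast
  moreover have "(\<lambda>n. m + \<sigma> / 8 * (\<epsilon> n)\<^sup>2) \<longlonglongrightarrow> m + \<sigma> / 8 * 0\<^sup>2"
    unfolding \<epsilon>_def by (intro tendsto_intros LIMSEQ_inverse_real_of_nat)
  ultimately have "g p \<le> ereal m"
    using lsc u unfolding seq_closed_epigraph_def by (simp add: less_imp_le)
  then show ?thesis using that lb order_trans by blast
qed

lemma prox_minimizes:
  fixes f :: "'a::euclidean_space \<Rightarrow> ereal"
  assumes wc: "weakly_convex \<rho> f" and closed: "seq_closed_epigraph f" and fin: "f y0 \<noteq> \<infinity>"
    and \<mu>: "0 < \<mu>" "\<rho> < 1 / \<mu>"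
  shows "f (prox \<mu> f x) + ereal (1 / (2 * \<mu>) * (norm (prox \<mu> f x - x))\<^sup>2)
       \<le> f y + ereal (1 / (2 * \<mu>) * (norm (y - x))\<^sup>2)"
proof -
  define \<phi> where "\<phi> y = f y + ereal (1 / (2 * \<mu>) * (norm (y - x))\<^sup>2)" for y
  have nm: "\<And>y. f y \<noteq> -\<infinity>" using wc unfolding weakly_convex_def by blast
  have sc: "strongly_convex_ereal (2 * (1 / (2 * \<mu>)) - \<rho>) \<phi>"
    unfolding \<phi>_def by (rule weakly_convex_add_sq_dist[OF wc])
  have lsc: "seq_closed_epigraph \<phi>"
    unfolding \<phi>_def using closed nm by (intro seq_closed_epigraph_add_continuous continuous_intros)
  have fin\<phi>: "\<phi> y0 \<noteq> \<infinity>" and nm\<phi>: "\<And>y. \<phi> y \<noteq> -\<infinity>" unfolding \<phi>_def using fin nm by auto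
  have "0 < 2 * (1 / (2 * \<mu>)) - \<rho>" using \<mu> by simp
  then obtain p where "\<And>y. \<phi> p \<le> \<phi> y"
    using strongly_convex_has_minimizer[OF lsc nm\<phi> fin\<phi> sc] by blast
  then have "\<exists>p. \<forall>y. \<phi> p \<le> \<phi> y" by blast
  then show ?thesis unfolding prox_def \<phi>_def[abs_def] by (rule someI_ex[THEN spec])
qed

lemma prox_linear_center_weights:
  fixes x0 xk :: "'a::real_vector"
  assumes \<mu>: "0 < \<mu>" and \<theta>: "0 \<le> \<theta>"
  shows "(1 / (2 * \<mu>) + \<theta> / 2) *\<^sub>R ((1 / (1 + \<theta> * \<mu>)) *\<^sub>R (x0 + (\<theta> * \<mu>) *\<^sub>R xk))
       = (1 / (2 * \<mu>)) *\<^sub>R x0 + (\<theta> / 2) *\<^sub>R xk"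
proof -
  have e1: "(1 / (2 * \<mu>) + \<theta> / 2) * (1 / (1 + \<theta> * \<mu>)) = 1 / (2 * \<mu>)"
    and e2: "1 / (2 * \<mu>) * (\<theta> * \<mu>) = \<theta> / 2"
    using \<mu> \<theta> by (simp_all add: field_simps add_nonneg_eq_0_iff)
  have "(1 / (2 * \<mu>) + \<theta> / 2) *\<^sub>R ((1 / (1 + \<theta> * \<mu>)) *\<^sub>R (x0 + (\<theta> * \<mu>) *\<^sub>R xk))
      = (1 / (2 * \<mu>)) *\<^sub>R (x0 + (\<theta> * \<mu>) *\<^sub>R xk)"
    unfolding scaleR_scaleR e1 ..
  also have "\<dots> = (1 / (2 * \<mu>)) *\<^sub>R x0 + (\<theta> / 2) *\<^sub>R xk"
    unfolding scaleR_add_right scaleR_scaleR e2 ..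
  finally show ?thesis .
qed

lemma prox_linear_step_contraction:
  fixes f :: "'a::euclidean_space \<Rightarrow> ereal"
  assumes model: "two_sided_model \<rho> q f fm" and \<mu>: "0 < \<mu>" and q: "0 \<le> q" "q \<le> \<theta>"
    and xs_min: "\<And>y. f xs + ereal (1 / (2 * \<mu>) * (norm (xs - x0))\<^sup>2)
                     \<le> f y + ereal (1 / (2 * \<mu>) * (norm (y - x0))\<^sup>2)"
    and xs_fin: "f xs \<noteq> \<infinity>"
    and step: "\<forall>z. fm xk x1
                 + ereal ((1 + \<theta> * \<mu>) / (2 * \<mu>)
                     * (norm (x1 - (1 / (1 + \<theta> * \<mu>)) *\<^sub>R (x0 + (\<theta> * \<mu>) *\<^sub>R xk)))\<^sup>2)
               \<le> fm xk z
                 + ereal ((1 + \<theta> * \<mu>) / (2 * \<mu>)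
                     * (norm (z - (1 / (1 + \<theta> * \<mu>)) *\<^sub>R (x0 + (\<theta> * \<mu>) *\<^sub>R xk)))\<^sup>2)"
  shows "(1 / \<mu> - \<rho> + \<theta>) * (norm (x1 - xs))\<^sup>2 \<le> (q + \<theta>) * (norm (xk - xs))\<^sup>2"
proof -
  define c where "c = (1 / (1 + \<theta> * \<mu>)) *\<^sub>R (x0 + (\<theta> * \<mu>) *\<^sub>R xk)"
  define \<alpha> where "\<alpha> = (1 + \<theta> * \<mu>) / (2 * \<mu>)"
  define G where "G z = fm xk z + ereal (\<alpha> * (norm (z - c))\<^sup>2)" for z
  have \<alpha>: "\<alpha> = 1 / (2 * \<mu>) + \<theta> / 2" unfolding \<alpha>_def using \<mu> by (simp add: field_simps)
  have wc: "weakly_convex \<rho> (fm xk)" using model unfolding two_sided_model_def by blast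
  then have nm: "\<And>y. fm xk y \<noteq> -\<infinity>" unfolding weakly_convex_def by blast
  have up: "\<And>y. fm xk y \<le> f y + ereal (q / 2 * (norm (y - xk))\<^sup>2)"
    and lo: "\<And>y. f y \<le> fm xk y + ereal (q / 2 * (norm (y - xk))\<^sup>2)"
    using model unfolding two_sided_model_def by blast+
  obtain fs where fs: "f xs = ereal fs"
    using xs_fin up[of xs] nm[of xs] by (cases "f xs") auto
  obtain Ms where Ms: "fm xk xs = ereal Ms" and Ms_le: "Ms \<le> fs + q / 2 * (norm (xs - xk))\<^sup>2"
    using up[of xs] nm[of xs] unfolding fs by (auto elim: ereal_le_realE)
  have G_min: "\<And>y. G x1 \<le> G y" unfolding G_def \<alpha>_def c_def using step by blast
  have "G xs \<noteq> \<infinity>" unfolding G_def Ms by simp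
  with G_min[of xs] have "G x1 \<noteq> \<infinity>" by auto
  then obtain M1 where M1: "fm xk x1 = ereal M1" using nm[of x1] unfolding G_def by (cases "fm xk x1") auto
  have "f x1 \<noteq> -\<infinity>" using xs_min[of x1] unfolding fs by auto
  with lo[of x1] obtain F1 where F1: "f x1 = ereal F1" and F1_le: "F1 \<le> M1 + q / 2 * (norm (x1 - xk))\<^sup>2"
    unfolding M1 by (auto elim: ereal_le_realE)
  have S: "2 * \<alpha> - \<rho> = 1 / \<mu> - \<rho> + \<theta>" unfolding \<alpha> using \<mu> by (simp add: field_simps)
  have growth: "M1 + \<alpha> * (norm (x1 - c))\<^sup>2 + (2 * \<alpha> - \<rho>) / 2 * (norm (xs - x1))\<^sup>2
      \<le> Ms + \<alpha> * (norm (xs - c))\<^sup>2"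
    by (rule strongly_convex_quadratic_growth[OF weakly_convex_add_sq_dist[OF wc] G_min[unfolded G_def]])
      (simp_all add: M1 Ms)
  have prox_opt: "fs + 1 / (2 * \<mu>) * (norm (xs - x0))\<^sup>2 \<le> F1 + 1 / (2 * \<mu>) * (norm (x1 - x0))\<^sup>2"
    using xs_min[of x1] unfolding fs F1 by simp
  have "(1 / (2 * \<mu>) + \<theta> / 2) *\<^sub>R c = (1 / (2 * \<mu>)) *\<^sub>R x0 + (\<theta> / 2) *\<^sub>R xk"
    unfolding c_def using \<mu> q by (intro prox_linear_center_weights) auto
  note recenter = weighted_norm_sq_recenter[OF this, folded \<alpha>]
  have "\<theta> / 2 * (norm (x1 - xk))\<^sup>2 - q / 2 * (norm (x1 - xk))\<^sup>2 \<ge> 0"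
    using q by (simp add: mult_right_mono)
  then have "(1 / \<mu> - \<rho> + \<theta>) / 2 * (norm (xs - x1))\<^sup>2
      \<le> q / 2 * (norm (xs - xk))\<^sup>2 + \<theta> / 2 * (norm (xs - xk))\<^sup>2"
    using growth[unfolded S] Ms_le F1_le prox_opt recenter[of xs] recenter[of x1] by linarith
  then show ?thesis by (simp add: norm_minus_commute field_simps)
qed

lemma geometric_decay:
  fixes d :: "nat \<Rightarrow> real"
  assumes step: "\<And>k. d (Suc k) \<le> L * d k" and "0 \<le> L"
  shows "d k \<le> L ^ k * d 0"
proof (induction k)
  case (Suc k)
  have "d (Suc k) \<le> L * d k" by (rule step)
  also have "\<dots> \<le> L * (L ^ k * d 0)" using Suc \<open>0 \<le> L\<close> by (rule mult_left_mono)
  finally show ?case by simp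
qed simp

lemma power_le_sq_of_log_bound:
  fixes L a :: real
  assumes L: "0 < L" "L < 1" and a: "0 < a"
    and K: "real K \<ge> 2 * ln (1 / a) / ln (1 / L)"
  shows "L ^ K \<le> a\<^sup>2"
proof -
  have "0 < ln (1 / L)" using L by simp
  then have "2 * ln (1 / a) \<le> real K * ln (1 / L)" using K by (simp add: pos_divide_le_eq)
  then have "ln (L ^ K) \<le> ln (a\<^sup>2)" using L a by (simp add: ln_div ln_realpow)
  then show ?thesis using L a by simp
qed

lemma sq_contraction_iterate:
  fixes x :: "nat \<Rightarrow> 'a::real_normed_vector"
  assumes step: "\<And>k. (norm (x (Suc k) - p))\<^sup>2 \<le> L * (norm (x k - p))\<^sup>2"
    and L: "0 < L" "L < 1" and a: "0 < a"
    and K: "real K \<ge> 2 * ln (1 / a) / ln (1 / L)"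
  shows "norm (x K - p) \<le> a * norm (x 0 - p)"
proof -
  have "(norm (x K - p))\<^sup>2 \<le> L ^ K * (norm (x 0 - p))\<^sup>2"
    using step L by (intro geometric_decay) auto
  also have "\<dots> \<le> a\<^sup>2 * (norm (x 0 - p))\<^sup>2"
    using power_le_sq_of_log_bound[OF L a K] by (simp add: mult_right_mono)
  finally have "(norm (x K - p))\<^sup>2 \<le> (a * norm (x 0 - p))\<^sup>2" by (simp add: power_mult_distrib)
  then show ?thesis by (rule power2_le_imp_le) (use a in simp)
qed

theorem mainTheorem9:
  fixes f :: "'a::euclidean_space \<Rightarrow> ereal"
    and fm :: "'a \<Rightarrow> 'a \<Rightarrow> ereal"
    and \<rho> q a \<mu> \<theta> :: real
    and x :: "nat \<Rightarrow> 'a"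
    and K :: nat
  assumes wc: "weakly_convex \<rho> f"
    and proper: "\<exists>y. f y \<noteq> \<infinity>"
    and model: "two_sided_model \<rho> q f fm"
    and a: "0 < a" "a < 1"
    and mu_pos: "0 < \<mu>"
    and mu: "1 / \<mu> > \<rho> + q"
    and theta: "\<theta> > q"
    and step: "\<And>k. \<forall>z. fm (x k) (x (Suc k))
                 + ereal ((1 + \<theta> * \<mu>) / (2 * \<mu>)
                     * (norm (x (Suc k) - (1 / (1 + \<theta> * \<mu>)) *\<^sub>R (x 0 + (\<theta> * \<mu>) *\<^sub>R x k)))\<^sup>2)
               \<le> fm (x k) z
                 + ereal ((1 + \<theta> * \<mu>) / (2 * \<mu>)
                     * (norm (z - (1 / (1 + \<theta> * \<mu>)) *\<^sub>R (x 0 + (\<theta> * \<mu>) *\<^sub>R x k)))\<^sup>2)"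
    and K: "real K \<ge> 2 * ln (1 / a) / ln ((1 / \<mu> - \<rho> + \<theta>) / (q + \<theta>))"
  shows "norm (x K - prox \<mu> f (x 0)) \<le> a * norm (x 0 - prox \<mu> f (x 0))"
proof -
  define xs where "xs = prox \<mu> f (x 0)"
  define S where "S = 1 / \<mu> - \<rho> + \<theta>"
  obtain y0 where fin: "f y0 \<noteq> \<infinity>" using proper by blast
  then have q: "0 \<le> q" by (rule two_sided_model_nonneg[OF model])
  have qS: "0 < q + \<theta>" "q + \<theta> < S" unfolding S_def using q theta mu by auto
  have "\<rho> < 1 / \<mu>" using mu q by linarith
  with wc two_sided_model_seq_closed_epigraph[OF model] fin mu_pos
  have xs_min: "\<And>y. f xs + ereal (1 / (2 * \<mu>) * (norm (xs - x 0))\<^sup>2)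
                     \<le> f y + ereal (1 / (2 * \<mu>) * (norm (y - x 0))\<^sup>2)"
    unfolding xs_def by (rule prox_minimizes)
  have xs_fin: "f xs \<noteq> \<infinity>" using xs_min[of y0] fin by auto
  have "(norm (x (Suc k) - xs))\<^sup>2 \<le> (q + \<theta>) / S * (norm (x k - xs))\<^sup>2" for k
  proof -
    have "S * (norm (x (Suc k) - xs))\<^sup>2 \<le> (q + \<theta>) * (norm (x k - xs))\<^sup>2"
      unfolding S_def
      by (rule prox_linear_step_contraction[OF model mu_pos q less_imp_le[OF theta] xs_min xs_fin step[of k]])
    then show ?thesis using qS by (simp add: field_simps)
  qed
  then show ?thesis
    unfolding xs_def by (rule sq_contraction_iterate) (use qS a K in \<open>auto simp: S_def\<close>)
qed

end
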